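(* Let $k\ge1$, $m_1,\dots,m_k\ge1$ integers, $s_1,\dots,s_k\in\{-1,1\}$, $w=m_1+\dots+m_k$, and let $\mathcal S(\zeta(m_1,\dots,m_k;s_1,\dots,s_k))$ denote the symbol defined in the context. (1) If at least one $m_i$ is different from $1$ and $(m_1,s_1)\neq(1,1)$, then $\mathcal S(\zeta(m_1,\dots,m_k;s_1,\dots,s_k))=0$. (2) For every $m\ge1$ and all $s_2,\dots,s_m\in\{-1,1\}$, $\mathcal S(\zeta(1,\dots,1;-1,s_2,\dots,s_m))=(1/2)^{\otimes m}$ $(=(-1)^m\,2^{\otimes m})$, i.e. it equals the symbol of $\frac{1}{m!}\ln^m\frac12$, so that $\mathcal S\big(\zeta(1,\dots,1;-1,s_2,\dots,s_m)-\frac1{m!}\ln^m\frac12\big)=0$.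
   Context: Colored multiple zeta values: $\zeta(m_1,\dots,m_k;s_1,\dots,s_k)=\sum_{0<n_1<\dots<n_k}\frac{s_1^{n_1}\cdots s_k^{n_k}}{n_1^{m_1}\cdots n_k^{m_k}}$. Put $\hat s_j=\prod_{i\le j}s_i$. Symbol calculus over $\mathbb Q$: let $V=\mathbb Q^\times\otimes_{\mathbb Z}\mathbb Q$ (a $\mathbb Q$-vector space in which torsion, in particular $-1$, becomes $0$); for $f\in\mathbb Q^\times$ write $f$ also for its image in $V$, so e.g. $(1/2)=-2$ in $V$. Tensors are taken in $V^{\otimes n}$, multilinear in the multiplicative sense ($\cdots\otimes(fg)\otimes\cdots=\cdots\otimes f\otimes\cdots+\cdots\otimes g\otimes\cdots$), and any formal tensor one of whose factors is the number $0$ is interpreted as $0\in V^{\otimes n}$. For $x,y$ define $\mu(x,y)=1-y/x$ if $x\neq0$ and $\mu(0,y)=y$. For a tuple $(a_1,\dots,a_n)$, $n\ge2$ (the "decorated polygon" $P(a_1,\dots,a_n)$ with root decoration $a_n$, attached to the multiple polylogarithm $G(a_{n-1},\dots,a_1;a_n)$), define $\mathcal S(a_1,\dots,a_n)\in V^{\otimes(n-1)}$ recursively by $\mathcal S(a_1,a_2)=\mu(a_1,a_2)$ and, for $n\ge3$, $\mathcal S(a_1,\dots,a_n)=\sum_{i=1}^{n-1}\mathcal S(a_1,\dots,\widehat{a_i},\dots,a_n)\otimes\mu(a_i,a_{i+1})-\sum_{i=2}^{n-1}\mathcal S(a_1,\dots,\widehat{a_i},\dots,a_n)\otimes\mu(a_i,a_{i-1})$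 (hat = omitted). The symbol of a colored MZV is defined as $\mathcal S(\zeta(m_1,\dots,m_k;s_1,\dots,s_k))=(-1)^w\,\mathcal S(\underbrace{0,\dots,0}_{m_k-1},\hat s_k,\underbrace{0,\dots,0}_{m_{k-1}-1},\hat s_{k-1},\dots,\underbrace{0,\dots,0}_{m_1-1},\hat s_1,1)$. The symbol of $\frac1{m!}\ln^m c$ is $c^{\otimes m}=c\otimes\cdots\otimes c$ ($m$ factors). *)

theory Defs
  imports Complex_Main "HOL-Computational_Algebra.Primes"
begin

text \<open>Model of V = Q^x (x) Q: via the p-adic valuations, V is identified with the
  Q-vector space with basis the primes (signs, in particular -1, become 0).
  An element of V^(x)n is represented by its coefficient function on
  lists of primes of length n (type nat list => rat); coefficients on other
  lists are 0.\<close>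

definition vval :: "rat \<Rightarrow> nat \<Rightarrow> rat" where
  "vval q p = (if prime p \<and> q \<noteq> 0 then
      of_nat (multiplicity (int p) (fst (quotient_of q)))
      - of_nat (multiplicity (int p) (snd (quotient_of q))) else 0)"

definition tens :: "rat list \<Rightarrow> nat list \<Rightarrow> rat" where
  "tens fs ps = (if length ps = length fs
                 then (\<Prod>i<length fs. vval (fs ! i) (ps ! i)) else 0)"

definition tens_right :: "(nat list \<Rightarrow> rat) \<Rightarrow> rat \<Rightarrow> nat list \<Rightarrow> rat" where
  "tens_right T f ps = (if ps = [] then 0 else T (butlast ps) * vval f (last ps))"

definition mu :: "rat \<Rightarrow> rat \<Rightarrow> rat" where
  "mu x y = (if x \<noteq> 0 then 1 - y / x else y)"

definition remove_nth :: "nat \<Rightarrow> 'a list \<Rightarrow> 'a list" where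
  "remove_nth i xs = take i xs @ drop (Suc i) xs"

text \<open>Symbol of the decorated polygon P(a_1,...,a_n) (list index 0-based);
  first argument is a fuel equal to the length of the list.\<close>
primrec symb_aux :: "nat \<Rightarrow> rat list \<Rightarrow> nat list \<Rightarrow> rat" where
  "symb_aux 0 as ps = 0"
| "symb_aux (Suc n) as ps =
     (if length as = 2 then tens [mu (as ! 0) (as ! 1)] ps
      else if length as \<ge> 3 then
        (\<Sum>i<length as - 1. tens_right (symb_aux n (remove_nth i as)) (mu (as ! i) (as ! Suc i)) ps)
        - (\<Sum>i\<in>{1..<length as - 1}. tens_right (symb_aux n (remove_nth i as)) (mu (as ! i) (as ! (i - 1))) ps)
      else 0)"

definition symb :: "rat list \<Rightarrow> nat list \<Rightarrow> rat" where
  "symb as = symb_aux (length as) as"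

text \<open>Symbol of zeta(m_1,...,m_k; s_1,...,s_k), with ms = [m_1,...,m_k],
  ss = [s_1,...,s_k]; hat s_j = s_1 * ... * s_j.\<close>
definition zeta_word :: "nat list \<Rightarrow> rat list \<Rightarrow> rat list" where
  "zeta_word ms ss =
     concat (map (\<lambda>j. replicate (ms ! j - 1) 0 @ [prod_list (take (Suc j) ss)])
                 (rev [0..<length ms])) @ [1]"

definition zeta_symb :: "nat list \<Rightarrow> rat list \<Rightarrow> nat list \<Rightarrow> rat" where
  "zeta_symb ms ss = (\<lambda>ps. (-1) ^ sum_list ms * symb (zeta_word ms ss) ps)"

end

theory Submission
  imports Defs
begin

text \<open>All letters of these words are 0 or \<open>\<plusminus>1\<close>, so the only factors \<open>\<mu>(a, b)\<close> with
  nonzero image in \<open>V\<close> are \<open>\<mu>(\<plusminus>1, \<mp>1) = 2\<close>. If some \<open>m\<^sub>i \<ge> 2\<close> the word contains a 0;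
  in each term of the recursion either the deleted vertex is 0, and then its factor is a letter
  of valuation zero, or it is not, and the smaller polygon still contains 0. By induction the
  symbol vanishes.

  For depth one the word consists of signs followed by \<open>-1, 1\<close>. Between signs \<open>\<mu>(a, b)\<close> and
  \<open>\<mu>(b, a)\<close> have the same image, so the recursion telescopes into differences of symbols of
  polygons with adjacent vertices deleted. Deleting a vertex before the final \<open>-1\<close> gives a
  shorter word of the same shape, whose symbol is a tensor power of 2 by induction; only the
  last two terms survive, and they combine to \<open>2\<^sup>\<otimes>\<^sup>m\<close>. The sign \<open>(-1)\<^sup>m\<close> turns this into
  \<open>(1/2)\<^sup>\<otimes>\<^sup>m\<close>.\<close>

lemma vval_zero [simp]: "vval 0 p = 0"
  by (simp add: vval_def)

lemma vval_one [simp]: "vval 1 p = 0"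
  by (simp add: vval_def)

lemma vval_minus_one [simp]: "vval (-1) p = 0"
  by (simp add: vval_def multiplicity_unit_right)

lemma vval_half: "vval (1/2) p = - vval 2 p"
proof -
  have "quotient_of (Fract 1 2) = (1, 2)"
    by (simp add: quotient_of_Fract normalize_def)
  then have "quotient_of (1/2 :: rat) = (1, 2)"
    by (metis Fract_of_int_quotient of_int_1 of_int_numeral)
  then show ?thesis
    by (simp add: vval_def)
qed

lemma vval_mu_eq_0:
  assumes "x \<in> {0, 1, -1}" "y \<in> {0, 1, -1}" "x = 0 \<or> y = 0"
  shows "vval (mu x y) p = 0"
proof (cases "x = 0")
  case True
  with assms(2) show ?thesis
    by (auto simp: mu_def)
next
  case False
  with assms(3) show ?thesis
    by (simp add: mu_def)
qed

lemma vval_mu_commute_units: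
  assumes "x \<in> {1, -1}" "y \<in> {1, -1}"
  shows "vval (mu x y) p = vval (mu y x) p"
  using assms by (auto simp: mu_def)

lemma tens_right_eq_0_if_vval_eq_0: "(\<And>p. vval f p = 0) \<Longrightarrow> tens_right T f ps = 0"
  by (simp add: tens_right_def)

lemma tens_right_zero [simp]: "tens_right (\<lambda>_. 0) f ps = 0"
  by (simp add: tens_right_def)

lemma tens_right_diff:
  "tens_right (\<lambda>q. A q - B q) f ps = tens_right A f ps - tens_right B f ps"
  by (simp add: tens_right_def algebra_simps)

lemma tens_right_vval_cong: "(\<And>p. vval f p = vval g p) \<Longrightarrow> tens_right T f = tens_right T g"
  by (simp add: tens_right_def fun_eq_iff)

lemma tens_snoc: "tens (fs @ [f]) = tens_right (tens fs) f"
proof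
  fix ps
  show "tens (fs @ [f]) ps = tens_right (tens fs) f ps"
  proof (cases "length ps = Suc (length fs)")
    case True
    have "tens (fs @ [f]) ps = (\<Prod>i<length fs. vval ((fs @ [f]) ! i) (ps ! i)) * vval f (ps ! length fs)"
      using True by (simp add: tens_def nth_append)
    also have "(\<Prod>i<length fs. vval ((fs @ [f]) ! i) (ps ! i)) = tens fs (butlast ps)"
      using True by (auto simp: tens_def nth_append nth_butlast intro: prod.cong)
    also have "ps ! length fs = last ps"
      using True by (cases ps rule: rev_exhaust) (auto simp: nth_append)
    finally show ?thesis
      using True by (auto simp: tens_right_def)
  next
    case False
    then show ?thesis
      by (cases ps rule: rev_exhaust) (auto simp: tens_def tens_right_def)
  qed
qed

lemma tens_replicate_half: "tens (replicate m (1/2)) ps = (-1) ^ m * tens (replicate m 2) ps"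
  by (simp add: tens_def vval_half prod_uminus)

lemma length_remove_nth: "i < length as \<Longrightarrow> length (remove_nth i as) = length as - 1"
  by (simp add: remove_nth_def)

lemma set_remove_nth_subset: "set (remove_nth i as) \<subseteq> set as"
  by (auto simp: remove_nth_def dest: in_set_takeD in_set_dropD)

lemma in_set_remove_nth:
  assumes "x \<in> set as" "x \<noteq> as ! i"
  shows "x \<in> set (remove_nth i as)"
proof (cases "i < length as")
  case True
  then have "as = take i as @ as ! i # drop (Suc i) as"
    by (rule id_take_nth_drop)
  then show ?thesis
    using assms by (simp add: remove_nth_def) (metis Un_iff insert_iff set_append set_simps(2))
next
  case False
  then show ?thesis
    using assms by (simp add: remove_nth_def)
qed

lemma remove_nth_append: "i < length xs \<Longrightarrow> remove_nth i (xs @ zs) = remove_nth i xs @ zs"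
  by (simp add: remove_nth_def)

lemma remove_nth_length_append: "remove_nth (length xs) (xs @ z # zs) = xs @ zs"
  by (simp add: remove_nth_def)

lemma symb_length_le_1: "length as \<le> 1 \<Longrightarrow> symb as ps = 0"
  by (cases as) (auto simp: symb_def)

lemma symb_two: "symb [a, b] = tens [mu a b]"
  by (simp add: fun_eq_iff symb_def numeral_2_eq_2)

lemma symb_recursion:
  assumes "length as \<ge> 3"
  shows "symb as ps =
     (\<Sum>i<length as - 1. tens_right (symb (remove_nth i as)) (mu (as ! i) (as ! Suc i)) ps)
   - (\<Sum>i\<in>{1..<length as - 1}. tens_right (symb (remove_nth i as)) (mu (as ! i) (as ! (i - 1))) ps)"
proof -
  obtain n where n: "length as = Suc n"
    using assms by (cases "length as") auto
  have "symb (remove_nth i as) = symb_aux n (remove_nth i as)" if "i < length as" for i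
    using n that by (simp add: symb_def length_remove_nth)
  then show ?thesis
    unfolding symb_def n using assms n
    by (auto simp: length_remove_nth intro!: arg_cong2 [where f = "(-)"] sum.cong)
qed

lemma symb_eq_0_if_terms_vanish:
  assumes "length as \<ge> 3"
    and "\<And>i j. i < length as \<Longrightarrow> j < length as \<Longrightarrow>
           tens_right (symb (remove_nth i as)) (mu (as ! i) (as ! j)) ps = 0"
  shows "symb as ps = 0"
  using assms by (subst symb_recursion) (auto intro!: sum.neutral)

lemma symb_eq_0_if_zero_letter:
  "set as \<subseteq> {0, 1, -1} \<Longrightarrow> 0 \<in> set as \<Longrightarrow> symb as ps = 0"
proof (induction "length as" arbitrary: as ps rule: less_induct)
  case less
  consider "length as \<le> 1" | "length as = 2" | "length as \<ge> 3"
    by linarith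
  then show ?case
  proof cases
    case 1
    then show ?thesis
      by (rule symb_length_le_1)
  next
    case 2
    then obtain a b where ab: "as = [a, b]"
      by (auto simp: numeral_2_eq_2 length_Suc_conv)
    with less.prems have "a \<in> {0, 1, -1}" "b \<in> {0, 1, -1}" "a = 0 \<or> b = 0"
      by auto
    then show ?thesis
      by (simp add: ab symb_two tens_def vval_mu_eq_0)
  next
    case 3
    show ?thesis
    proof (rule symb_eq_0_if_terms_vanish [OF 3])
      fix i j
      assume i: "i < length as" and j: "j < length as"
      show "tens_right (symb (remove_nth i as)) (mu (as ! i) (as ! j)) ps = 0"
      proof (cases "as ! i = 0")
        case True
        moreover have "as ! j \<in> {0, 1, -1}"
          using less.prems(1) j nth_mem by blast
        ultimately show ?thesis
          by (intro tens_right_eq_0_if_vval_eq_0 vval_mu_eq_0) simp_all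
      next
        case False
        have "length (remove_nth i as) < length as"
          using i 3 by (simp add: length_remove_nth)
        moreover have "set (remove_nth i as) \<subseteq> {0, 1, -1}"
          using set_remove_nth_subset less.prems(1) by (rule order_trans)
        moreover have "0 \<in> set (remove_nth i as)"
          using less.prems(2) False by (simp add: in_set_remove_nth)
        ultimately have "symb (remove_nth i as) q = 0" for q
          by (rule less.hyps)
        then show ?thesis
          by (simp add: tens_right_def)
      qed
    qed
  qed
qed

lemma symb_unit_word:
  assumes "length as \<ge> 3" and "set as \<subseteq> {1, -1}"
  shows "symb as ps =
      (\<Sum>i<length as - 2. tens_right (\<lambda>q. symb (remove_nth i as) q - symb (remove_nth (Suc i) as) q)
                             (mu (as ! i) (as ! Suc i)) ps)
    + tens_right (symb (remove_nth (length as - 2) as))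
        (mu (as ! (length as - 2)) (as ! (length as - 1))) ps"
proof -
  obtain N where N: "length as = N + 2"
    using assms(1) by (intro that [of "length as - 2"]) simp
  have unit: "as ! i \<in> {1, -1}" if "i < length as" for i
    using assms(2) that nth_mem by blast
  have "(\<Sum>i\<in>{1..<length as - 1}. tens_right (symb (remove_nth i as)) (mu (as ! i) (as ! (i - 1))) ps)
      = (\<Sum>i<N. tens_right (symb (remove_nth (Suc i) as)) (mu (as ! Suc i) (as ! i)) ps)"
    unfolding N One_nat_def add_2_eq_Suc' diff_Suc_Suc diff_zero sum.shift_bounds_Suc_ivl
      atLeast0LessThan by simp
  also have "\<dots> = (\<Sum>i<N. tens_right (symb (remove_nth (Suc i) as)) (mu (as ! i) (as ! Suc i)) ps)"
  proof (intro sum.cong refl)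
    fix i
    assume "i \<in> {..<N}"
    then have "as ! i \<in> {1, -1}" "as ! Suc i \<in> {1, -1}"
      using unit N by auto
    then show "tens_right (symb (remove_nth (Suc i) as)) (mu (as ! Suc i) (as ! i)) ps
        = tens_right (symb (remove_nth (Suc i) as)) (mu (as ! i) (as ! Suc i)) ps"
      by (metis tens_right_vval_cong vval_mu_commute_units)
  qed
  finally show ?thesis
    using symb_recursion [OF assms(1), of ps]
    by (simp add: N tens_right_diff sum_subtractf)
qed

lemma symb_units_minus_one_one:
  "set xs \<subseteq> {1, -1} \<Longrightarrow> symb (xs @ [-1, 1]) ps = tens (replicate (Suc (length xs)) 2) ps"
proof (induction "length xs" arbitrary: xs ps rule: less_induct)
  case less
  show ?case
  proof (cases xs rule: rev_exhaust)
    case Nil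
    then show ?thesis
      by (simp add: symb_two mu_def)
  next
    case (snoc ys b)
    define as where "as = xs @ [-1, 1]"
    define L where "L = length xs"
    define T where "T = tens (replicate L 2)"
    define S where "S = symb (ys @ [b, 1])"
    have L: "L = Suc (length ys)" "length as = L + 2"
      by (simp_all add: L_def as_def snoc)
    have b: "b = 1 \<or> b = -1"
      using less.prems snoc by auto
    have nth: "as ! length ys = b" "as ! L = -1" "as ! Suc L = 1"
      by (simp_all add: as_def L_def snoc nth_append)
    have remove_L: "remove_nth L as = ys @ [b, 1]"
      using remove_nth_length_append [of xs "-1" "[1]"] by (simp add: as_def L_def snoc)
    have remove_less_L: "symb (remove_nth i as) = T" if "i < L" for i
    proof
      fix q
      have shorter: "length (remove_nth i xs) < length xs"
        and length_eq: "Suc (length (remove_nth i xs)) = L"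
        using that by (simp_all add: L_def length_remove_nth)
      have "set (remove_nth i xs) \<subseteq> {1, -1}"
        using set_remove_nth_subset less.prems by (rule order_trans)
      with shorter have "symb (remove_nth i xs @ [-1, 1]) q
          = tens (replicate (Suc (length (remove_nth i xs))) 2) q"
        by (rule less.hyps)
      moreover have "remove_nth i as = remove_nth i xs @ [-1, 1]"
        using that by (simp add: as_def L_def remove_nth_append)
      ultimately show "symb (remove_nth i as) q = T q"
        by (simp only: T_def length_eq)
    qed
    have "(\<Sum>i<L. tens_right (\<lambda>q. symb (remove_nth i as) q - symb (remove_nth (Suc i) as) q)
                    (mu (as ! i) (as ! Suc i)) ps)
        = tens_right (\<lambda>q. T q - S q) (mu b (-1)) ps"
      using remove_less_L by (simp add: L(1) remove_L [unfolded L(1)] nth [unfolded L(1)] S_def)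
    then have "symb as ps = tens_right (\<lambda>q. T q - S q) (mu b (-1)) ps + tens_right S 2 ps"
      using symb_unit_word [of as ps] less.prems L nth remove_L
      by (simp add: as_def S_def mu_def)
    also have "\<dots> = tens_right T 2 ps"
    proof (cases "b = 1")
      case True
      then show ?thesis
        by (simp add: mu_def tens_right_diff)
    next
      case False
      then have "b = -1"
        using b by simp
      moreover have "S = T"
        using less.hyps [of ys] less.prems \<open>b = -1\<close>
        by (auto simp: S_def T_def L(1) snoc)
      ultimately show ?thesis
        by (simp add: mu_def)
    qed
    also have "\<dots> = tens (replicate (Suc L) 2) ps"
      by (simp add: T_def tens_snoc [symmetric] replicate_append_same)
    finally show ?thesis
      by (simp add: as_def L_def)
  qed
qed

lemma prod_list_units: "set xs \<subseteq> {1, -1} \<Longrightarrow> prod_list xs \<in> {1, -1 :: 'a :: comm_ring_1}"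
  by (induction xs) auto

lemma set_zeta_word_subset: "set ss \<subseteq> {1, -1} \<Longrightarrow> set (zeta_word ms ss) \<subseteq> {0, 1, -1}"
  using prod_list_units [OF order_trans [OF set_take_subset]]
  by (fastforce simp: zeta_word_def)

lemma zero_in_zeta_word:
  assumes "m \<in> set ms" "m \<ge> 2"
  shows "0 \<in> set (zeta_word ms ss)"
proof -
  obtain j where "j < length ms" "ms ! j = m"
    using assms(1) by (auto simp: in_set_conv_nth)
  with assms(2) show ?thesis
    unfolding zeta_word_def by force
qed

lemma zeta_word_replicate_one:
  "zeta_word (replicate m 1) ss = map (\<lambda>j. prod_list (take (Suc j) ss)) (rev [0..<m]) @ [1]"
proof -
  have letters: "map (\<lambda>j. replicate (replicate m 1 ! j - 1) 0 @ [prod_list (take (Suc j) ss)])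
      (rev [0..<m]) = map (\<lambda>j. [prod_list (take (Suc j) ss)]) (rev [0..<m])"
    by (rule map_cong) auto
  show ?thesis
    unfolding zeta_word_def length_replicate letters concat_map_singleton ..
qed

theorem proposition4:
  shows "(\<forall>ms ss. length ms \<ge> 1 \<longrightarrow> length ss = length ms
            \<longrightarrow> (\<forall>m\<in>set ms. m \<ge> 1) \<longrightarrow> (\<forall>s\<in>set ss. s = 1 \<or> s = -1)
            \<longrightarrow> (\<exists>m\<in>set ms. m \<noteq> 1) \<longrightarrow> \<not> (ms ! 0 = 1 \<and> ss ! 0 = 1)
            \<longrightarrow> zeta_symb ms ss = (\<lambda>_. 0))
       \<and> (\<forall>m ss. m \<ge> 1 \<longrightarrow> length ss = m \<longrightarrow> (\<forall>s\<in>set ss. s = 1 \<or> s = -1)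
            \<longrightarrow> ss ! 0 = -1
            \<longrightarrow> zeta_symb (replicate m 1) ss = tens (replicate m (1/2)))"
proof (intro conjI allI impI)
  fix ms :: "nat list" and ss :: "rat list"
  assume "\<forall>m\<in>set ms. m \<ge> 1" and units: "\<forall>s\<in>set ss. s = 1 \<or> s = -1"
    and "\<exists>m\<in>set ms. m \<noteq> 1"
  then obtain m where "m \<in> set ms" "m \<ge> 2"
    by force
  then have "symb (zeta_word ms ss) ps = 0" for ps
    using units by (intro symb_eq_0_if_zero_letter set_zeta_word_subset zero_in_zeta_word) auto
  then show "zeta_symb ms ss = (\<lambda>_. 0)"
    by (simp add: zeta_symb_def)
next
  fix m :: nat and ss :: "rat list"
  assume "m \<ge> 1" "length ss = m" and units: "\<forall>s\<in>set ss. s = 1 \<or> s = -1" and "ss ! 0 = -1"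
  define xs where "xs = map (\<lambda>j. prod_list (take (Suc j) ss)) (rev [1..<m])"
  have "rev [0..<m] = rev [1..<m] @ [0]" and "prod_list (take 1 ss) = -1"
    using \<open>m \<ge> 1\<close> \<open>length ss = m\<close> \<open>ss ! 0 = -1\<close>
    by (simp_all add: upt_conv_Cons take_Suc_conv_app_nth)
  then have word: "zeta_word (replicate m 1) ss = xs @ [-1, 1]"
    unfolding zeta_word_replicate_one xs_def by simp
  have xs_units: "set xs \<subseteq> {1, -1}"
    using units by (auto simp: xs_def intro!: prod_list_units dest: in_set_takeD)
  have length_xs: "Suc (length xs) = m"
    using \<open>m \<ge> 1\<close> by (simp add: xs_def)
  show "zeta_symb (replicate m 1) ss = tens (replicate m (1/2))"
  proof
    fix ps
    have "zeta_symb (replicate m 1) ss ps = (-1) ^ m * tens (replicate m 2) ps"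
      using symb_units_minus_one_one [OF xs_units, of ps]
      unfolding zeta_symb_def word by (simp add: length_xs sum_list_replicate)
    also have "\<dots> = tens (replicate m (1/2)) ps"
      by (simp add: tens_replicate_half)
    finally show "zeta_symb (replicate m 1) ss ps = tens (replicate m (1/2)) ps" .
  qed
qed

end
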